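(* Assume the standing setting and assumptions (A4)–(A8) described in the context. Let $k\in\mathbb{N}$, $k\ge 1$, let $U(T)=U_k(T)$ for all $T\in\mathcal{T}_H$, and let $u_H^{\mathrm{G\text{-}LOD}}\in V^{\mathrm{ms}}$ be the solution of $$a_h(u_H^{\mathrm{G\text{-}LOD}},\Phi^{\mathrm{ms}})=(f,\Phi^{\mathrm{ms}})\quad\text{for all }\Phi^{\mathrm{ms}}\in V^{\mathrm{ms}}.$$ Let $u_h\in V_h$ be the fine scale reference solution. Then $$\big\|u_h-\big((I_H|_{V_H})^{-1}\circ I_H\big)(u_H^{\mathrm{G\text{-}LOD}})\big\|_{L^2(\Omega)}+|||u_h-u_H^{\mathrm{G\text{-}LOD}}|||_h\lesssim\big(H+(1/H)^p k^{d/2}\theta^k\big)\|f\|_{L^2(\Omega)},$$ where $\theta\in(0,1)$ and $p\in\{0,1\}$ are the constants from (A8).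
   Context: Standing setting. $\Omega\subset\mathbb{R}^d$, $d\in\{1,2,3\}$, is a bounded Lipschitz domain with piecewise polygonal boundary; $f\in L^2(\Omega)$; $A\in L^\infty(\Omega,\mathbb{R}^{d\times d}_{sym})$ with spectrum $\sigma(A(x))\subset[\alpha_0,\beta_0]$, $0<\alpha_0\le\beta_0$, for a.e. $x\in\Omega$. $(\cdot,\cdot)$ denotes the $L^2(\Omega)$ inner product. $\mathcal{T}_H$ (coarse) and $\mathcal{T}_h$ (fine) are shape-regular conforming partitions of $\Omega$ with maximal element diameters $H$ and $h<H/2$; $\mathcal{T}_h$ is a refinement of $\mathcal{T}_H$ in which each coarse element is at least twice uniformly refined. (A4)/(A6): $V_h$ is a finite-dimensional space of functions on $\Omega$ (not necessarily a subspace of $H^1_0(\Omega)$), $V_H\subset V_h$ is a subspace associated with $\mathcal{T}_H$, $a_h(\cdot,\cdot)$ is a scalar product on $V_h$ and $a_H(\cdot,\cdot)$ a scalar product on $V_H$. (A5): $|||\cdot|||_h$ is a norm on $V_h$ and there are constants $0<\alpha\le\beta$ with $\alpha|||v|||_h^2\le a_h(v,v)$ and $a_h(v,w)\le\beta|||v|||_h|||w|||_h$ for all $v,w\in V_h$; $|||\cdot|||_H$ is a norm on $V_H$ (also evaluated on elements of $V_h$), and $C_{H,h}$ is a constant with $|||v|||_H\le C_{H,h}|||v|||_h$ for all $v\in V_h$. (A7): $I_H:V_h\to V_H$ is linear and there is a constant $C_{I_H}$ (depending only on shape regularity) such that for all $v_h\in V_h$, $v_H\in V_H$: $\|v_h-I_H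 v_h\|_{L^2(\Omega)}\le C_{I_H}H|||v_h|||_h$, $|||I_Hv_h|||_H\le C_{I_H}|||v_h|||_h$, $\|v_H-I_Hv_H\|_{L^2(\Omega)}\le C_{I_H}H|||v_H|||_H$, $\|I_Hv_H\|_{L^2(\Omega)}\le C_{I_H}|||v_H|||_H$; moreover $I_H|_{V_H}:V_H\to V_H$ is an isomorphism and $|||(I_H|_{V_H})^{-1}v_H|||_H\le C_{I_H^{-1}}|||v_H|||_H$ for all $v_H\in V_H$. Definitions. $W_h:=\{v\in V_h: I_Hv=0\}$, so $V_h=V_H\oplus W_h$. $P_h:V_h\to W_h$ is the $a_h$-orthogonal projection ($a_h(P_hv,w)=a_h(v,w)$ for all $w\in W_h$) and $V^{\mathrm{ms}}_\Omega:=(1-P_h)(V_H)$. Coarse patches: $U_0(T):=T$, $U_k(T):=\bigcup\{T'\in\mathcal{T}_H: T'\cap U_{k-1}(T)\ne\emptyset\}$. For an open set $U$ that is a union of fine elements, $\mathring W_h(U):=\{v\in W_h: v=0 \text{ in }\Omega\setminus U\}$. Bilinear forms $a_h^T$, $T\in\mathcal{T}_H$, are given with $a_h(v,w)=\sum_{T\in\mathcal{T}_H}a_h^T(v,w)$ for all $v,w\in V_h$ ($a_h^T$ acting only on $T$ or a small neighbourhood of $T$). Given patches $U(T)\supset T$, for $\phi\in V_h$ the local corrector $Q_h^T(\phi)\in\mathring W_h(U(T))$ solves $a_h(Q_h^T(\phi),w)=-a_h^T(\phi,w)$ for all $w\in\mathring W_h(U(T))$; $Q_h(\phi):=\sum_{T}Q_h^T(\phi)$,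 and $V^{\mathrm{ms}}:=\{\Phi_H+Q_h(\Phi_H):\Phi_H\in V_H\}$. $Q_h^{\Omega,T}$ and $Q_h^\Omega:=\sum_TQ_h^{\Omega,T}$ denote the correctors obtained with $U(T)=\Omega$ for all $T$. (A8): There are $p\in\{0,1\}$ and $\theta\in(0,1)$ (possibly depending on the contrast $\beta_0/\alpha_0$ but not on $H,h$ or the oscillations of $A$) such that for every $k\ge1$, with $U(T)=U_k(T)$ for all $T$, and all $\Phi_H\in V_H$: $|||(Q_h-Q_h^\Omega)(\Phi_H)|||_h^2\lesssim k^d\theta^{2k}(1/H)^{2p}|||\Phi_H+Q_h^\Omega(\Phi_H)|||_h^2$. Fine scale reference solution: $u_h\in V_h$ with $a_h(u_h,v)=(f,v)$ for all $v\in V_h$. Notation: $a\lesssim b$ means $a\le Cb$ with $C$ independent of $H$, $h$, $k$ and the oscillations of $A$ (it may depend on $\alpha,\beta,C_{I_H},C_{I_H^{-1}}$, shape regularity and the contrast). *)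

theory Defs
  imports "HOL-Analysis.Analysis"
begin

type_synonym 'd fn = "real^'d \<Rightarrow> real"

definition fadd :: "'d fn \<Rightarrow> 'd fn \<Rightarrow> 'd fn" where
  "fadd u v = (\<lambda>x. u x + v x)"

definition fscale :: "real \<Rightarrow> 'd fn \<Rightarrow> 'd fn" where
  "fscale c u = (\<lambda>x. c * u x)"

definition fdiff :: "'d fn \<Rightarrow> 'd fn \<Rightarrow> 'd fn" where
  "fdiff u v = (\<lambda>x. u x - v x)"

definition fzero :: "'d fn" where
  "fzero = (\<lambda>x. 0)"

definition fsubspace :: "'d fn set \<Rightarrow> bool" where
  "fsubspace V \<longleftrightarrow> fzero \<in> V \<and> (\<forall>u\<in>V. \<forall>v\<in>V. \<forall>c. fadd u (fscale c v) \<in> V)"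

definition findim :: "'d fn set \<Rightarrow> bool" where
  "findim V \<longleftrightarrow> (\<exists>B. finite B \<and> B \<subseteq> V \<and>
      (\<forall>v\<in>V. \<exists>c. v = (\<lambda>x. \<Sum>b\<in>B. c b * b x)))"

definition linear_on :: "'d fn set \<Rightarrow> ('d fn \<Rightarrow> 'd fn) \<Rightarrow> bool" where
  "linear_on V L \<longleftrightarrow> (\<forall>u\<in>V. \<forall>v\<in>V. \<forall>c. L (fadd u (fscale c v)) = fadd (L u) (fscale c (L v)))"

definition bilinear_on :: "'d fn set \<Rightarrow> ('d fn \<Rightarrow> 'd fn \<Rightarrow> real) \<Rightarrow> bool" where
  "bilinear_on V a \<longleftrightarrow> (\<forall>u\<in>V. \<forall>v\<in>V. \<forall>w\<in>V. \<forall>c.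
      a (fadd u (fscale c v)) w = a u w + c * a v w \<and>
      a w (fadd u (fscale c v)) = a w u + c * a w v)"

definition scalar_product_on :: "'d fn set \<Rightarrow> ('d fn \<Rightarrow> 'd fn \<Rightarrow> real) \<Rightarrow> bool" where
  "scalar_product_on V a \<longleftrightarrow> bilinear_on V a \<and> (\<forall>u\<in>V. \<forall>v\<in>V. a u v = a v u) \<and>
      (\<forall>v\<in>V. v \<noteq> fzero \<longrightarrow> a v v > 0)"

definition norm_on :: "'d fn set \<Rightarrow> ('d fn \<Rightarrow> real) \<Rightarrow> bool" where
  "norm_on V n \<longleftrightarrow> (\<forall>v\<in>V. n v \<ge> 0 \<and> (n v = 0 \<longleftrightarrow> v = fzero)) \<and>
      (\<forall>v\<in>V. \<forall>c. n (fscale c v) = \<bar>c\<bar> * n v) \<and>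
      (\<forall>u\<in>V. \<forall>v\<in>V. n (fadd u v) \<le> n u + n v)"

definition L2_fun :: "(real^'d) set \<Rightarrow> 'd fn \<Rightarrow> bool" where
  "L2_fun \<Omega> v \<longleftrightarrow> v \<in> borel_measurable (lebesgue_on \<Omega>) \<and>
      integrable (lebesgue_on \<Omega>) (\<lambda>x. (v x)\<^sup>2)"

definition L2_inner :: "(real^'d) set \<Rightarrow> 'd fn \<Rightarrow> 'd fn \<Rightarrow> real" where
  "L2_inner \<Omega> u v = integral\<^sup>L (lebesgue_on \<Omega>) (\<lambda>x. u x * v x)"

definition L2_norm :: "(real^'d) set \<Rightarrow> 'd fn \<Rightarrow> real" where
  "L2_norm \<Omega> v = sqrt (integral\<^sup>L (lebesgue_on \<Omega>) (\<lambda>x. (v x)\<^sup>2))"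

definition conforming_mesh :: "(real^'d) set \<Rightarrow> (real^'d) set set \<Rightarrow> bool" where
  "conforming_mesh \<Omega> \<T> \<longleftrightarrow> finite \<T> \<and> \<T> \<noteq> {} \<and>
     (\<forall>K\<in>\<T>. polytope K \<and> interior K \<noteq> {}) \<and>
     \<Union>\<T> = closure \<Omega> \<and>
     (\<forall>K\<in>\<T>. \<forall>K'\<in>\<T>. (K \<inter> K') face_of K \<and> (K \<inter> K') face_of K')"

definition shape_regular :: "real \<Rightarrow> (real^'d) set set \<Rightarrow> bool" where
  "shape_regular \<rho> \<T> \<longleftrightarrow> (\<forall>K\<in>\<T>. \<exists>x r. r > 0 \<and> ball x r \<subseteq> K \<and> diameter K \<le> \<rho> * r)"

definition mesh_size :: "(real^'d) set set \<Rightarrow> real" where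
  "mesh_size \<T> = Max (diameter ` \<T>)"

definition refines :: "(real^'d) set set \<Rightarrow> (real^'d) set set \<Rightarrow> bool" where
  "refines \<T>h \<T>H \<longleftrightarrow> (\<forall>K\<in>\<T>h. \<exists>K'\<in>\<T>H. K \<subseteq> K')"

fun patch :: "(real^'d) set set \<Rightarrow> nat \<Rightarrow> (real^'d) set \<Rightarrow> (real^'d) set" where
  "patch \<T> 0 T = T"
| "patch \<T> (Suc k) T = \<Union>{T'\<in>\<T>. T' \<inter> patch \<T> k T \<noteq> {}}"

definition Wh :: "'d fn set \<Rightarrow> ('d fn \<Rightarrow> 'd fn) \<Rightarrow> 'd fn set" where
  "Wh Vh IH = {v\<in>Vh. IH v = fzero}"

definition Wh_loc :: "(real^'d) set \<Rightarrow> 'd fn set \<Rightarrow> ('d fn \<Rightarrow> 'd fn) \<Rightarrow> (real^'d) set \<Rightarrow> 'd fn set" where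
  "Wh_loc \<Omega> Vh IH U = {v\<in>Wh Vh IH. AE x in lebesgue. x \<in> \<Omega> - U \<longrightarrow> v x = 0}"

definition loc_corrector :: "'d fn set \<Rightarrow> ('d fn \<Rightarrow> 'd fn \<Rightarrow> real) \<Rightarrow> ('d fn \<Rightarrow> 'd fn \<Rightarrow> real)
     \<Rightarrow> 'd fn \<Rightarrow> 'd fn" where
  "loc_corrector W a aT \<phi> = (THE q. q \<in> W \<and> (\<forall>w\<in>W. a q w = - aT \<phi> w))"

definition corrector :: "(real^'d) set \<Rightarrow> (real^'d) set set \<Rightarrow> 'd fn set \<Rightarrow> ('d fn \<Rightarrow> 'd fn)
     \<Rightarrow> ('d fn \<Rightarrow> 'd fn \<Rightarrow> real) \<Rightarrow> ((real^'d) set \<Rightarrow> 'd fn \<Rightarrow> 'd fn \<Rightarrow> real)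
     \<Rightarrow> ((real^'d) set \<Rightarrow> (real^'d) set) \<Rightarrow> 'd fn \<Rightarrow> 'd fn" where
  "corrector \<Omega> \<T>H Vh IH a aT U \<phi> =
     (\<lambda>x. \<Sum>T\<in>\<T>H. loc_corrector (Wh_loc \<Omega> Vh IH (U T)) a (aT T) \<phi> x)"

definition Vms :: "(real^'d) set \<Rightarrow> (real^'d) set set \<Rightarrow> 'd fn set \<Rightarrow> 'd fn set \<Rightarrow> ('d fn \<Rightarrow> 'd fn)
     \<Rightarrow> ('d fn \<Rightarrow> 'd fn \<Rightarrow> real) \<Rightarrow> ((real^'d) set \<Rightarrow> 'd fn \<Rightarrow> 'd fn \<Rightarrow> real)
     \<Rightarrow> ((real^'d) set \<Rightarrow> (real^'d) set) \<Rightarrow> 'd fn set" where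
  "Vms \<Omega> \<T>H Vh VH IH a aT U = {fadd \<Phi> (corrector \<Omega> \<T>H Vh IH a aT U \<Phi>) | \<Phi>. \<Phi> \<in> VH}"

end

theory Submission
  imports Defs "HOL-Library.Function_Algebras"
begin

text \<open>
  Writing \<open>J = (I\<^sub>H|\<^sub>V\<^sub>H)\<^sup>-\<^sup>1\<close>, the ideal method
  approximates the reference solution \<open>u\<^sub>h\<close> by \<open>u\<^sup>\<Omega> = \<Phi> + Q\<^sup>\<Omega>(\<Phi>)\<close> with \<open>\<Phi> = J(I\<^sub>H u\<^sub>h)\<close>;
  the error \<open>u\<^sub>h - u\<^sup>\<Omega>\<close> lies in the kernel \<open>W\<^sub>h\<close> of \<open>I\<^sub>H\<close> and is \<open>a\<^sub>h\<close>-orthogonal to \<open>u\<^sup>\<Omega>\<close>,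
  so the approximation property of \<open>I\<^sub>H\<close> makes it \<open>O(H)\<parallel>f\<parallel>\<close> in energy. Replacing
  \<open>Q\<^sup>\<Omega>\<close> by the localised corrector costs the localisation error of (A8), and C\'ea's lemma
  transfers the resulting bound to the Galerkin solution \<open>u\<^sup>G\<^sup>-\<^sup>L\<^sup>O\<^sup>D\<^sub>H\<close>. The \<open>L\<^sup>2\<close> error of
  the reconstruction \<open>J(I\<^sub>H u\<^sup>G\<^sup>-\<^sup>L\<^sup>O\<^sup>D\<^sub>H)\<close> is then bounded by an \<open>O(H)\<close> term plus the energy error.
\<close>

lemma fadd_eq: "fadd u v = u + v"
  by (simp add: fadd_def plus_fun_def)

lemma fdiff_eq: "fdiff u v = u - v"
  by (simp add: fdiff_def fun_diff_def)

lemma fzero_eq: "fzero = 0"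
  by (simp add: fzero_def zero_fun_def)

lemma fscale_one [simp]: "fscale 1 v = v"
  by (simp add: fscale_def)

lemma fscale_minus_one: "fscale (-1) v = - v"
  by (auto simp: fscale_def)

text \<open>Functions \<open>\<real>\<^sup>d \<rightarrow> \<real>\<close> with the pointwise operations form a real vector space; this gives
  access to the library notions of subspace, span and basis.\<close>
interpretation FV: vector_space "fscale :: real \<Rightarrow> ('d::finite) fn \<Rightarrow> 'd fn"
  by unfold_locales (auto simp: fscale_def plus_fun_def algebra_simps)

lemma sum_fun_apply: "(sum f A) x = (\<Sum>a\<in>A. (f a :: 'b \<Rightarrow> 'c::comm_monoid_add) x)"
  by (induct A rule: infinite_finite_induct) auto

lemma fsubspace_imp_subspace:
  assumes "fsubspace V"
  shows "FV.subspace V"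
  unfolding FV.subspace_def
proof (intro conjI ballI allI)
  show "0 \<in> V" using assms by (simp add: fsubspace_def fzero_eq)
  have closed: "u + fscale c v \<in> V" if "u \<in> V" "v \<in> V" for u v c
    using assms that by (simp add: fsubspace_def fadd_eq)
  show "u + v \<in> V" if "u \<in> V" "v \<in> V" for u v
    using closed[OF that, of 1] by simp
  show "fscale c v \<in> V" if "v \<in> V" for c v
    using closed[OF \<open>0 \<in> V\<close> that, of c] by simp
qed

lemma findim_imp_finite_span:
  assumes "findim V"
  shows "\<exists>B. finite B \<and> V \<subseteq> FV.span B"
proof -
  obtain B where B: "finite B" "\<forall>v\<in>V. \<exists>c. v = (\<lambda>x. \<Sum>b\<in>B. c b * b x)"
    using assms unfolding findim_def by blast
  have "v \<in> FV.span B" if "v \<in> V" for v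
  proof -
    obtain c where "v = (\<lambda>x. \<Sum>b\<in>B. c b * b x)" using B(2) \<open>v \<in> V\<close> by blast
    then have "v = (\<Sum>b\<in>B. fscale (c b) b)" by (auto simp: fscale_def sum_fun_apply)
    then show ?thesis by (simp add: FV.span_finite[OF B(1)])
  qed
  then show ?thesis using B(1) by blast
qed

section \<open>Riesz representation in finite dimension\<close>

locale spd_form =
  fixes W :: "('d::finite) fn set" and a :: "'d fn \<Rightarrow> 'd fn \<Rightarrow> real"
  assumes subspace: "FV.subspace W"
    and linear_left: "\<And>u v w c. u \<in> W \<Longrightarrow> v \<in> W \<Longrightarrow> w \<in> W \<Longrightarrow> a (u + fscale c v) w = a u w + c * a v w"
    and symmetric: "\<And>u v. u \<in> W \<Longrightarrow> v \<in> W \<Longrightarrow> a u v = a v u"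
    and positive: "\<And>v. v \<in> W \<Longrightarrow> v \<noteq> 0 \<Longrightarrow> a v v > 0"
begin

lemma zero_in [simp]: "0 \<in> W"
  using subspace FV.subspace_0 by blast

lemma add_in: "u \<in> W \<Longrightarrow> v \<in> W \<Longrightarrow> u + v \<in> W"
  using subspace FV.subspace_add by blast

lemma scale_in: "v \<in> W \<Longrightarrow> fscale c v \<in> W"
  using subspace FV.subspace_scale by blast

lemma diff_in: "u \<in> W \<Longrightarrow> v \<in> W \<Longrightarrow> u - v \<in> W"
  using subspace FV.subspace_diff by blast

lemma zero_left: "w \<in> W \<Longrightarrow> a 0 w = 0"
  using linear_left[of 0 0 w 1] by simp

lemma scale_left: "v \<in> W \<Longrightarrow> w \<in> W \<Longrightarrow> a (fscale c v) w = c * a v w"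
  using linear_left[of 0 v w c] zero_left by simp

lemma add_left: "u \<in> W \<Longrightarrow> v \<in> W \<Longrightarrow> w \<in> W \<Longrightarrow> a (u + v) w = a u w + a v w"
  using linear_left[of u v w 1] by simp

lemma diff_left: "u \<in> W \<Longrightarrow> v \<in> W \<Longrightarrow> w \<in> W \<Longrightarrow> a (u - v) w = a u w - a v w"
  using linear_left[of u v w "-1"] by (simp add: fscale_minus_one)

lemma zero_right: "w \<in> W \<Longrightarrow> a w 0 = 0"
  using zero_left symmetric zero_in by metis

lemma scale_right: "v \<in> W \<Longrightarrow> w \<in> W \<Longrightarrow> a w (fscale c v) = c * a w v"
  using scale_left symmetric scale_in by metis

lemma add_right: "u \<in> W \<Longrightarrow> v \<in> W \<Longrightarrow> w \<in> W \<Longrightarrow> a w (u + v) = a w u + a w v"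
  using add_left symmetric add_in by metis

lemma diff_right: "u \<in> W \<Longrightarrow> v \<in> W \<Longrightarrow> w \<in> W \<Longrightarrow> a w (u - v) = a w u - a w v"
  using diff_left symmetric diff_in by metis

lemma restrict: "FV.subspace W' \<Longrightarrow> W' \<subseteq> W \<Longrightarrow> spd_form W' a"
  unfolding spd_form_def using linear_left symmetric positive by (auto simp: subset_iff)

lemma sum_left:
  "finite A \<Longrightarrow> (\<And>i. i \<in> A \<Longrightarrow> g i \<in> W) \<Longrightarrow> w \<in> W \<Longrightarrow> a (sum g A) w = (\<Sum>i\<in>A. a (g i) w)"
proof (induction A rule: finite_induct)
  case (insert i A)
  have "sum g A \<in> W" using insert by (auto intro: FV.subspace_sum[OF subspace])
  then have "a (g i + sum g A) w = a (g i) w + a (sum g A) w"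
    using insert by (intro add_left) auto
  moreover have "a (sum g A) w = (\<Sum>i\<in>A. a (g i) w)" using insert by simp
  ultimately show ?case by (simp only: sum.insert[OF insert.hyps])
qed (simp add: zero_left)

definition functional :: "('d fn \<Rightarrow> real) \<Rightarrow> bool" where
  "functional l \<longleftrightarrow> (\<forall>u\<in>W. \<forall>v\<in>W. \<forall>c. l (u + fscale c v) = l u + c * l v)"

lemma functional_zero:
  assumes "functional l" shows "l 0 = 0"
proof -
  have "l (0 + fscale 1 0) = l 0 + 1 * l 0"
    using assms zero_in unfolding functional_def by blast
  then show ?thesis by simp
qed

lemma functional_form: "v \<in> W \<Longrightarrow> functional (a v)"
  unfolding functional_def by (simp add: add_right scale_right scale_in)

lemma representation_on_span:
  assumes l: "functional l" and q: "q \<in> W" and S: "S \<subseteq> W" and rep: "\<forall>s\<in>S. a q s = l s"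
  shows "\<forall>w\<in>FV.span S. a q w = l w"
proof -
  let ?P = "{w\<in>W. a q w = l w}"
  have "FV.subspace ?P"
    unfolding FV.subspace_def
  proof (intro conjI ballI allI)
    show "0 \<in> ?P" using zero_right[OF q] functional_zero[OF l] by simp
    show "x + y \<in> ?P" if "x \<in> ?P" "y \<in> ?P" for x y
      using that l[unfolded functional_def, rule_format, of x y 1] by (simp add: add_in add_right q)
    show "fscale c x \<in> ?P" if "x \<in> ?P" for c x
      using that l[unfolded functional_def, rule_format, of 0 x c] functional_zero[OF l]
      by (simp add: scale_in scale_right q)
  qed
  then show ?thesis using S rep FV.span_minimal[of S ?P] by blast
qed

lemma span_in: "S \<subseteq> W \<Longrightarrow> FV.span S \<subseteq> W"
  using FV.span_minimal subspace by blast

text \<open>Gram--Schmidt step: from representers of \<open>l\<close> and of \<open>a x\<close> on \<open>span S\<close> one obtains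
  a representer of \<open>l\<close> on \<open>insert x S\<close>, correcting by the component of \<open>x\<close> orthogonal to \<open>span S\<close>.\<close>
lemma representation_insert:
  assumes x: "x \<in> W" and S: "S \<subseteq> W" and l: "functional l"
    and q0: "q0 \<in> FV.span S" "\<forall>w\<in>FV.span S. a q0 w = l w"
    and r: "r \<in> FV.span S" "\<forall>w\<in>FV.span S. a r w = a x w"
  shows "\<exists>q\<in>FV.span (insert x S). \<forall>s\<in>insert x S. a q s = l s"
proof -
  have q0W: "q0 \<in> W" and rW: "r \<in> W" using q0 r span_in[OF S] by auto
  have span_mono: "FV.span S \<subseteq> FV.span (insert x S)" by (rule FV.span_mono) auto
  define y where "y = x - r"
  have yW: "y \<in> W" unfolding y_def using diff_in x rW by blast
  have y_span: "y \<in> FV.span (insert x S)"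
    unfolding y_def using span_mono r FV.span_diff FV.span_base[of x "insert x S"] by blast
  have y_orth: "a y w = 0" if "w \<in> FV.span S" for w
    using r that span_in[OF S] by (auto simp: y_def diff_left x rW)
  show ?thesis
  proof (cases "y = 0")
    case True
    then have "a q0 x = l x" using q0(2) r by (simp add: y_def)
    moreover have "\<forall>s\<in>S. a q0 s = l s" using q0(2) FV.span_base by blast
    ultimately have "\<forall>s\<in>insert x S. a q0 s = l s" by blast
    then show ?thesis using q0(1) span_mono by blast
  next
    case False
    have yy: "a y y > 0" using positive[OF yW False] .
    have "a y y = a y x - a y r" using diff_right[OF x rW yW] by (simp add: y_def)
    then have yx: "a y x = a y y" using y_orth[OF r(1)] by simp
    define t where "t = (l x - a q0 x) / a y y"
    define q where "q = q0 + fscale t y"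
    have "q \<in> FV.span (insert x S)"
      unfolding q_def using q0(1) span_mono y_span FV.span_add FV.span_scale by blast
    moreover have "a q s = l s" if s: "s \<in> insert x S" for s
    proof -
      have sW: "s \<in> W" using s x S by auto
      have aq: "a q s = a q0 s + t * a y s"
        unfolding q_def using linear_left[OF q0W yW sW] .
      show ?thesis
      proof (cases "s = x")
        case True
        then show ?thesis using aq yx yy by (simp add: t_def)
      next
        case False
        then have "s \<in> FV.span S" using s FV.span_base by auto
        then show ?thesis using aq q0(2) y_orth by simp
      qed
    qed
    ultimately show ?thesis by blast
  qed
qed

lemma representation_finite:
  assumes "finite S" "S \<subseteq> W" "functional l"
  shows "\<exists>q\<in>FV.span S. \<forall>s\<in>S. a q s = l s"
  using assms
proof (induction S arbitrary: l rule: finite_induct)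
  case empty
  then show ?case using FV.span_zero by blast
next
  case (insert x S)
  have x: "x \<in> W" and S: "S \<subseteq> W" using insert.prems by auto
  obtain q0 where q0: "q0 \<in> FV.span S" "\<forall>s\<in>S. a q0 s = l s"
    using insert.IH[OF S insert.prems(2)] by blast
  obtain r where r: "r \<in> FV.span S" "\<forall>s\<in>S. a r s = a x s"
    using insert.IH[OF S functional_form[OF x]] by blast
  have "q0 \<in> W" "r \<in> W" using q0(1) r(1) span_in[OF S] by auto
  then have "\<forall>w\<in>FV.span S. a q0 w = l w" "\<forall>w\<in>FV.span S. a r w = a x w"
    using representation_on_span[OF insert.prems(2) _ S q0(2)]
      representation_on_span[OF functional_form[OF x] _ S r(2)] by blast+
  then show ?case
    using representation_insert[OF x S insert.prems(2) q0(1) _ r(1)] by blast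
qed

theorem riesz_representation:
  assumes B: "finite B" "W \<subseteq> FV.span B" and l: "functional l"
  shows "\<exists>!q. q \<in> W \<and> (\<forall>w\<in>W. a q w = l w)"
proof -
  obtain S where S: "S \<subseteq> W" "FV.independent S" "W \<subseteq> FV.span S" "card S = FV.dim W"
    by (rule FV.basis_exists)
  have "finite S"
    using FV.independent_span_bound[OF B(1) S(2)] S(1) B(2) by (meson order_trans)
  then obtain q where q: "q \<in> FV.span S" "\<forall>s\<in>S. a q s = l s"
    using representation_finite[OF _ S(1) l] by blast
  have qW: "q \<in> W" using q(1) span_in[OF S(1)] by blast
  have rep: "\<forall>w\<in>W. a q w = l w"
    using representation_on_span[OF l qW S(1) q(2)] S(3) by blast
  show ?thesis
  proof (rule ex1I[of _ q])
    show "q \<in> W \<and> (\<forall>w\<in>W. a q w = l w)" using qW rep by blast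
    fix p assume p: "p \<in> W \<and> (\<forall>w\<in>W. a p w = l w)"
    then have "p - q \<in> W" using diff_in qW by blast
    moreover have "a (p - q) (p - q) = 0" using p rep \<open>p - q \<in> W\<close> qW by (simp add: diff_left)
    ultimately show "p = q" using positive[of "p - q"] by fastforce
  qed
qed

end

section \<open>The \<open>L\<^sup>2\<close> inner product and norm\<close>

text \<open>A real quadratic polynomial that is nonnegative everywhere has nonpositive discriminant;
  this is the form of the Cauchy--Schwarz inequality used below.\<close>
lemma nonneg_quadratic_discriminant:
  fixes A B P :: real
  assumes nonneg: "\<And>t. 0 \<le> t\<^sup>2 * A + 2 * t * P + B" and "0 \<le> A"
  shows "\<bar>P\<bar> \<le> sqrt A * sqrt B"
proof (cases "A = 0")
  case True
  have "P = 0"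
  proof (rule ccontr)
    assume "P \<noteq> 0"
    then have "2 * (- (B + 1) / (2 * P)) * P + B = -1" by (simp add: field_simps)
    then show False using nonneg[of "- (B + 1) / (2 * P)"] True by simp
  qed
  then show ?thesis using nonneg[of 0] \<open>0 \<le> A\<close> by simp
next
  case False
  then have A: "A > 0" using \<open>0 \<le> A\<close> by simp
  have "0 \<le> (- P / A)\<^sup>2 * A + 2 * (- P / A) * P + B" by (rule nonneg)
  also have "\<dots> = B - P\<^sup>2 / A" using A by (simp add: field_simps power2_eq_square)
  finally have "P\<^sup>2 \<le> A * B" using A by (simp add: field_simps)
  then have "sqrt (P\<^sup>2) \<le> sqrt (A * B)" by (rule real_sqrt_le_mono)
  then show ?thesis by (simp add: real_sqrt_mult)
qed

lemma L2_product_integrable: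
  assumes u: "L2_fun \<Omega> u" and v: "L2_fun \<Omega> v"
  shows "integrable (lebesgue_on \<Omega>) (\<lambda>x. u x * v x)"
proof (rule Bochner_Integration.integrable_bound)
  show "integrable (lebesgue_on \<Omega>) (\<lambda>x. (u x)\<^sup>2 + (v x)\<^sup>2)"
    using u v unfolding L2_fun_def by auto
  show "(\<lambda>x. u x * v x) \<in> borel_measurable (lebesgue_on \<Omega>)"
    using u v unfolding L2_fun_def by auto
  show "AE x in lebesgue_on \<Omega>. norm (u x * v x) \<le> norm ((u x)\<^sup>2 + (v x)\<^sup>2)"
  proof (rule AE_I2)
    fix x
    have "2 * \<bar>u x * v x\<bar> \<le> (u x)\<^sup>2 + (v x)\<^sup>2"
      using sum_squares_bound[of "\<bar>u x\<bar>" "\<bar>v x\<bar>"] by (simp add: abs_mult power2_eq_square)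
    then show "norm (u x * v x) \<le> norm ((u x)\<^sup>2 + (v x)\<^sup>2)" by simp
  qed
qed

lemma L2_square_integral_nonneg: "0 \<le> integral\<^sup>L (lebesgue_on \<Omega>) (\<lambda>x. ((u::'d::finite fn) x)\<^sup>2)"
  by (rule Bochner_Integration.integral_nonneg_AE) auto

lemma L2_norm_nonneg: "0 \<le> L2_norm \<Omega> u"
  unfolding L2_norm_def using L2_square_integral_nonneg by simp

lemma L2_square_expansion:
  assumes u: "L2_fun \<Omega> u" and v: "L2_fun \<Omega> v"
  shows "integral\<^sup>L (lebesgue_on \<Omega>) (\<lambda>x. (t * u x + v x)\<^sup>2)
     = t\<^sup>2 * (L2_norm \<Omega> u)\<^sup>2 + 2 * t * L2_inner \<Omega> u v + (L2_norm \<Omega> v)\<^sup>2"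
proof -
  have split: "(\<lambda>x. (t * u x + v x)\<^sup>2) = (\<lambda>x. (t\<^sup>2 * (u x)\<^sup>2 + (2 * t) * (u x * v x)) + (v x)\<^sup>2)"
    by (auto simp: power2_eq_square algebra_simps)
  have i1: "integrable (lebesgue_on \<Omega>) (\<lambda>x. t\<^sup>2 * (u x)\<^sup>2)" using u by (simp add: L2_fun_def)
  have i2: "integrable (lebesgue_on \<Omega>) (\<lambda>x. (2 * t) * (u x * v x))"
    using L2_product_integrable[OF u v] by simp
  have i3: "integrable (lebesgue_on \<Omega>) (\<lambda>x. (v x)\<^sup>2)" using v by (simp add: L2_fun_def)
  show ?thesis
    unfolding split L2_norm_def L2_inner_def
    by (simp add: Bochner_Integration.integral_add[OF Bochner_Integration.integrable_add[OF i1 i2] i3]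
        Bochner_Integration.integral_add[OF i1 i2] L2_square_integral_nonneg)
qed

text \<open>Cauchy--Schwarz inequality: the quadratic \<open>t \<mapsto> \<parallel>t u + v\<parallel>\<^sup>2\<close> is nonnegative.\<close>
lemma L2_cauchy_schwarz:
  assumes "L2_fun \<Omega> u" "L2_fun \<Omega> v"
  shows "\<bar>L2_inner \<Omega> u v\<bar> \<le> L2_norm \<Omega> u * L2_norm \<Omega> v"
proof -
  have "\<bar>L2_inner \<Omega> u v\<bar> \<le> sqrt ((L2_norm \<Omega> u)\<^sup>2) * sqrt ((L2_norm \<Omega> v)\<^sup>2)"
  proof (rule nonneg_quadratic_discriminant)
    show "0 \<le> t\<^sup>2 * (L2_norm \<Omega> u)\<^sup>2 + 2 * t * L2_inner \<Omega> u v + (L2_norm \<Omega> v)\<^sup>2" for t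
      using L2_square_expansion[OF assms, of t] L2_square_integral_nonneg[of \<Omega> "\<lambda>x. t * u x + v x"]
      by simp
  qed simp
  then show ?thesis by (simp add: L2_norm_nonneg)
qed

lemma L2_triangle:
  assumes "L2_fun \<Omega> u" "L2_fun \<Omega> v"
  shows "L2_norm \<Omega> (u + v) \<le> L2_norm \<Omega> u + L2_norm \<Omega> v"
proof -
  have "(L2_norm \<Omega> (u + v))\<^sup>2 = integral\<^sup>L (lebesgue_on \<Omega>) (\<lambda>x. (1 * u x + v x)\<^sup>2)"
    unfolding L2_norm_def using L2_square_integral_nonneg[of \<Omega> "u + v"] by simp
  also have "\<dots> = (L2_norm \<Omega> u)\<^sup>2 + 2 * L2_inner \<Omega> u v + (L2_norm \<Omega> v)\<^sup>2"
    using L2_square_expansion[OF assms, of 1] by simp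
  also have "\<dots> \<le> (L2_norm \<Omega> u + L2_norm \<Omega> v)\<^sup>2"
    using L2_cauchy_schwarz[OF assms] by (simp add: power2_sum)
  finally show ?thesis
    using L2_norm_nonneg by (meson add_nonneg_nonneg power2_le_imp_le)
qed

lemma L2_norm_minus_commute: "L2_norm \<Omega> (u - v) = L2_norm \<Omega> (v - u)"
  unfolding L2_norm_def by (simp add: power2_commute)

lemma norm_on_nonneg: "norm_on V n \<Longrightarrow> v \<in> V \<Longrightarrow> 0 \<le> n v"
  unfolding norm_on_def by blast

lemma norm_on_triangle: "norm_on V n \<Longrightarrow> u \<in> V \<Longrightarrow> v \<in> V \<Longrightarrow> n (u + v) \<le> n u + n v"
  unfolding norm_on_def by (simp add: fadd_eq)

lemma norm_on_minus: "norm_on V n \<Longrightarrow> v \<in> V \<Longrightarrow> n (- v) = n v"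
  unfolding norm_on_def by (metis abs_minus_cancel abs_one fscale_minus_one mult_1)

lemma norm_on_diff:
  assumes "norm_on V n" "FV.subspace V" "u \<in> V" "v \<in> V"
  shows "n (u - v) \<le> n u + n v"
proof -
  have "- v \<in> V" using FV.subspace_neg[OF assms(2,4)] .
  then show ?thesis
    using norm_on_triangle[OF assms(1,3)] norm_on_minus[OF assms(1,4)] by fastforce
qed

lemma coercivity_bound:
  fixes \<alpha> x y :: real
  assumes "0 < \<alpha>" "0 \<le> x" "\<alpha> * x\<^sup>2 \<le> y * x" "0 \<le> y"
  shows "x \<le> y / \<alpha>"
proof (cases "x = 0")
  case False
  then have "\<alpha> * x \<le> y" using assms by (simp add: power2_eq_square mult.assoc[symmetric])
  then show ?thesis using assms by (simp add: field_simps)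
qed (use assms in simp)

lemma two_scale_sum_le:
  fixes a b H \<delta> F :: real
  assumes "0 \<le> a" "0 \<le> b" "0 \<le> H" "0 \<le> \<delta>" "0 \<le> F"
  shows "a * H * F + b * \<delta> * F \<le> (a + b) * (H + \<delta>) * F"
proof -
  have "0 \<le> a * \<delta> * F + b * H * F" using assms by simp
  then show ?thesis by (simp add: algebra_simps)
qed
section \<open>Correctors\<close>

locale lod_spaces =
  fixes \<Omega> :: "(real^'d::finite) set" and TH :: "(real^'d) set set" and Vh :: "'d fn set"
    and IH :: "'d fn \<Rightarrow> 'd fn" and ah :: "'d fn \<Rightarrow> 'd fn \<Rightarrow> real"
    and aT :: "(real^'d) set \<Rightarrow> 'd fn \<Rightarrow> 'd fn \<Rightarrow> real"
  assumes finite_TH: "finite TH"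
    and Vh_subspace: "fsubspace Vh" and Vh_findim: "findim Vh"
    and ah_scalar_product: "scalar_product_on Vh ah"
    and IH_linear: "linear_on Vh IH"
    and aT_bilinear: "\<forall>T\<in>TH. bilinear_on Vh (aT T)"
    and ah_split: "\<forall>v\<in>Vh. \<forall>w\<in>Vh. ah v w = (\<Sum>T\<in>TH. aT T v w)"
begin

abbreviation Q :: "((real^'d) set \<Rightarrow> (real^'d) set) \<Rightarrow> 'd fn \<Rightarrow> 'd fn" where
  "Q U \<equiv> corrector \<Omega> TH Vh IH ah aT U"

lemma Vh_FV_subspace: "FV.subspace Vh"
  by (rule fsubspace_imp_subspace[OF Vh_subspace])

sublocale Vh: spd_form Vh ah
proof
  show "FV.subspace Vh" by (rule Vh_FV_subspace)
  show "ah (u + fscale c v) w = ah u w + c * ah v w" if "u \<in> Vh" "v \<in> Vh" "w \<in> Vh" for u v w c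
    using ah_scalar_product that unfolding scalar_product_on_def bilinear_on_def by (simp add: fadd_eq)
  show "ah u v = ah v u" if "u \<in> Vh" "v \<in> Vh" for u v
    using ah_scalar_product that unfolding scalar_product_on_def by blast
  show "0 < ah v v" if "v \<in> Vh" "v \<noteq> 0" for v
    using ah_scalar_product that unfolding scalar_product_on_def by (simp add: fzero_eq)
qed

lemma IH_add_scale: "u \<in> Vh \<Longrightarrow> v \<in> Vh \<Longrightarrow> IH (u + fscale c v) = IH u + fscale c (IH v)"
  using IH_linear unfolding linear_on_def by (simp add: fadd_eq)

lemma IH_zero: "IH 0 = 0"
  using IH_add_scale[of 0 0 1] by simp

lemma IH_add: "u \<in> Vh \<Longrightarrow> v \<in> Vh \<Longrightarrow> IH (u + v) = IH u + IH v"
  using IH_add_scale[of u v 1] by simp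

lemma IH_scale: "v \<in> Vh \<Longrightarrow> IH (fscale c v) = fscale c (IH v)"
  using IH_add_scale[of 0 v c] IH_zero by simp

lemma IH_diff: "u \<in> Vh \<Longrightarrow> v \<in> Vh \<Longrightarrow> IH (u - v) = IH u - IH v"
  using IH_add_scale[of u v "-1"] by (simp add: fscale_minus_one)

lemma Wh_loc_subspace: "FV.subspace (Wh_loc \<Omega> Vh IH U)"
  unfolding FV.subspace_def
proof (intro conjI ballI allI)
  show "0 \<in> Wh_loc \<Omega> Vh IH U"
    unfolding Wh_loc_def Wh_def by (simp add: fzero_eq IH_zero)
  show "x + y \<in> Wh_loc \<Omega> Vh IH U" if x: "x \<in> Wh_loc \<Omega> Vh IH U" and y: "y \<in> Wh_loc \<Omega> Vh IH U" for x y
  proof -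
    have "AE z in lebesgue. z \<in> \<Omega> - U \<longrightarrow> x z = 0" "AE z in lebesgue. z \<in> \<Omega> - U \<longrightarrow> y z = 0"
      using x y unfolding Wh_loc_def by auto
    then have "AE z in lebesgue. z \<in> \<Omega> - U \<longrightarrow> (x + y) z = 0" by eventually_elim simp
    then show ?thesis
      using x y unfolding Wh_loc_def Wh_def by (simp add: fzero_eq IH_add Vh.add_in)
  qed
  show "fscale c x \<in> Wh_loc \<Omega> Vh IH U" if x: "x \<in> Wh_loc \<Omega> Vh IH U" for c x
  proof -
    have "AE z in lebesgue. z \<in> \<Omega> - U \<longrightarrow> x z = 0"
      using x unfolding Wh_loc_def by auto
    then have "AE z in lebesgue. z \<in> \<Omega> - U \<longrightarrow> fscale c x z = 0"
      by eventually_elim (simp add: fscale_def)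
    then show ?thesis
      using x unfolding Wh_loc_def Wh_def by (simp add: fzero_eq IH_scale Vh.scale_in)
  qed
qed

lemma Wh_loc_Vh: "Wh_loc \<Omega> Vh IH U \<subseteq> Vh"
  unfolding Wh_loc_def Wh_def by auto

lemma Wh_loc_Omega: "Wh_loc \<Omega> Vh IH \<Omega> = Wh Vh IH"
  unfolding Wh_loc_def by auto

lemma Wh_iff: "v \<in> Wh Vh IH \<longleftrightarrow> v \<in> Vh \<and> IH v = 0"
  unfolding Wh_def by (simp add: fzero_eq)

text \<open>Each element corrector is well defined: it is the Riesz representer of
  \<open>-a\<^sub>h\<^sup>T(\<phi>,\<cdot>)\<close> in the finite-dimensional space \<open>W\<^sub>h(U)\<close>.\<close>
lemma loc_corrector_spec:
  assumes T: "T \<in> TH" and \<phi>: "\<phi> \<in> Vh"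
  shows "loc_corrector (Wh_loc \<Omega> Vh IH U) ah (aT T) \<phi> \<in> Wh_loc \<Omega> Vh IH U
     \<and> (\<forall>w\<in>Wh_loc \<Omega> Vh IH U. ah (loc_corrector (Wh_loc \<Omega> Vh IH U) ah (aT T) \<phi>) w = - aT T \<phi> w)"
proof -
  let ?W = "Wh_loc \<Omega> Vh IH U"
  interpret W: spd_form ?W ah
    by (rule Vh.restrict[OF Wh_loc_subspace Wh_loc_Vh])
  obtain B where B: "finite B" "Vh \<subseteq> FV.span B" using findim_imp_finite_span[OF Vh_findim] by blast
  have "W.functional (\<lambda>w. - aT T \<phi> w)"
    using aT_bilinear T \<phi> Wh_loc_Vh unfolding W.functional_def bilinear_on_def
    by (auto simp: fadd_eq subset_iff)
  moreover have "?W \<subseteq> FV.span B" using B(2) Wh_loc_Vh by blast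
  ultimately have "\<exists>!q. q \<in> ?W \<and> (\<forall>w\<in>?W. ah q w = - aT T \<phi> w)"
    using W.riesz_representation[OF B(1)] by blast
  from theI'[OF this] show ?thesis unfolding loc_corrector_def .
qed

lemma corrector_sum:
  "Q U \<phi> = (\<Sum>T\<in>TH. loc_corrector (Wh_loc \<Omega> Vh IH (U T)) ah (aT T) \<phi>)"
  unfolding corrector_def by (rule ext) (simp add: sum_fun_apply)

lemma corrector_in_Wh:
  assumes "\<phi> \<in> Vh"
  shows "Q U \<phi> \<in> Wh Vh IH"
  unfolding corrector_sum
proof (rule FV.subspace_sum)
  show "FV.subspace (Wh Vh IH)" using Wh_loc_subspace[of \<Omega>] by (simp add: Wh_loc_Omega)
  show "loc_corrector (Wh_loc \<Omega> Vh IH (U T)) ah (aT T) \<phi> \<in> Wh Vh IH" if "T \<in> TH" for T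
    using loc_corrector_spec[OF that assms] unfolding Wh_loc_def by simp
qed

lemma corrector_in_Vh: "\<phi> \<in> Vh \<Longrightarrow> Q U \<phi> \<in> Vh"
  using corrector_in_Wh Wh_iff by blast

text \<open>The global corrector is the \<open>a\<^sub>h\<close>-orthogonal projection onto \<open>W\<^sub>h\<close> up to sign:
  \<open>\<phi> + Q\<^sup>\<Omega>(\<phi>)\<close> is \<open>a\<^sub>h\<close>-orthogonal to \<open>W\<^sub>h\<close>.\<close>
lemma global_corrector_orthogonal:
  assumes \<phi>: "\<phi> \<in> Vh" and w: "w \<in> Wh Vh IH"
  shows "ah (\<phi> + Q (\<lambda>T. \<Omega>) \<phi>) w = 0"
proof -
  let ?q = "\<lambda>T. loc_corrector (Wh Vh IH) ah (aT T) \<phi>"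
  have wV: "w \<in> Vh" using w Wh_iff by blast
  have q: "?q T \<in> Wh Vh IH" "ah (?q T) w = - aT T \<phi> w" if "T \<in> TH" for T
    using loc_corrector_spec[OF that \<phi>, of \<Omega>] w by (simp_all add: Wh_loc_Omega)
  have "ah (Q (\<lambda>T. \<Omega>) \<phi>) w = (\<Sum>T\<in>TH. ah (?q T) w)"
    unfolding corrector_sum Wh_loc_Omega
    by (rule Vh.sum_left[OF finite_TH _ wV]) (use q(1) Wh_iff in blast)
  also have "\<dots> = - ah \<phi> w"
    using q(2) ah_split \<phi> wV by (simp add: sum_negf)
  finally show ?thesis using Vh.add_left[OF \<phi> corrector_in_Vh[OF \<phi>] wV] by simp
qed

end

section \<open>Error analysis\<close>

definition poincare_constant :: "real \<Rightarrow> real \<Rightarrow> real" where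
  "poincare_constant CI D = CI * D + CI * CI * (D + 1)"

definition energy_constant :: "real \<Rightarrow> real \<Rightarrow> real \<Rightarrow> real \<Rightarrow> real \<Rightarrow> real" where
  "energy_constant CI C8 \<alpha> \<beta> D = \<beta> / \<alpha> * (CI + sqrt C8 * (poincare_constant CI D + CI * D)) / \<alpha>"

definition glod_constant :: "real \<Rightarrow> real \<Rightarrow> real \<Rightarrow> real \<Rightarrow> real \<Rightarrow> real \<Rightarrow> real" where
  "glod_constant CI CIinv C8 \<alpha> \<beta> D =
     CI * (1 + CIinv * CI) * poincare_constant CI D / \<alpha>
     + (CI * (D + 1) * CIinv * CI + 1) * energy_constant CI C8 \<alpha> \<beta> D"

locale lod_setting = lod_spaces +
  fixes VH and nh nH and H D CI CIinv \<alpha> \<beta> :: real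
  assumes Vh_L2: "\<forall>v\<in>Vh. L2_fun \<Omega> v"
    and VH_subspace: "fsubspace VH" and VH_Vh: "VH \<subseteq> Vh"
    and nh_norm: "norm_on Vh nh"
    and coercive: "\<forall>v\<in>Vh. \<alpha> * (nh v)\<^sup>2 \<le> ah v v"
    and continuous: "\<forall>v\<in>Vh. \<forall>w\<in>Vh. ah v w \<le> \<beta> * nh v * nh w"
    and nH_norm: "norm_on VH nH"
    and IH_range: "\<forall>v\<in>Vh. IH v \<in> VH"
    and IH_approx_fine: "\<forall>v\<in>Vh. L2_norm \<Omega> (v - IH v) \<le> CI * H * nh v"
    and IH_stable_fine: "\<forall>v\<in>Vh. nH (IH v) \<le> CI * nh v"
    and IH_approx_coarse: "\<forall>v\<in>VH. L2_norm \<Omega> (v - IH v) \<le> CI * H * nH v"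
    and IH_L2_coarse: "\<forall>v\<in>VH. L2_norm \<Omega> (IH v) \<le> CI * nH v"
    and IH_bij: "bij_betw IH VH VH"
    and IH_inv_stable: "\<forall>v\<in>VH. nH (inv_into VH IH v) \<le> CIinv * nH v"
    and alpha_pos: "0 < \<alpha>" and alpha_le_beta: "\<alpha> \<le> \<beta>"
    and CI_nonneg: "0 \<le> CI" and CIinv_nonneg: "0 \<le> CIinv"
    and H_nonneg: "0 \<le> H" and H_le_D: "H \<le> D"
begin

abbreviation J where
  "J \<equiv> inv_into VH IH"

lemma nh_nonneg: "v \<in> Vh \<Longrightarrow> 0 \<le> nh v"
  using norm_on_nonneg[OF nh_norm] .

lemma nH_nonneg: "v \<in> VH \<Longrightarrow> 0 \<le> nH v"
  using norm_on_nonneg[OF nH_norm] .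

lemma nh_diff: "u \<in> Vh \<Longrightarrow> v \<in> Vh \<Longrightarrow> nh (u - v) \<le> nh u + nh v"
  using norm_on_diff[OF nh_norm Vh_FV_subspace] .

lemma VH_FV_subspace: "FV.subspace VH"
  by (rule fsubspace_imp_subspace[OF VH_subspace])

lemma J_in_VH: "a \<in> VH \<Longrightarrow> J a \<in> VH"
  using IH_bij by (metis bij_betw_imp_surj_on inv_into_into)

lemma IH_J: "a \<in> VH \<Longrightarrow> IH (J a) = a"
  using IH_bij by (metis bij_betw_imp_surj_on f_inv_into_f)

lemma J_IH: "z \<in> VH \<Longrightarrow> J (IH z) = z"
  using IH_bij by (metis bij_betw_imp_inj_on inv_into_f_f)

lemma J_IH_in_VH: "v \<in> Vh \<Longrightarrow> J (IH v) \<in> VH"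
  using J_in_VH IH_range by blast

lemma scaled_H_le_D: "0 \<le> c \<Longrightarrow> 0 \<le> x \<Longrightarrow> c * H * x \<le> c * D * x"
  by (intro mult_right_mono mult_left_mono H_le_D)

lemma J_diff:
  assumes "a \<in> VH" "b \<in> VH"
  shows "J (a - b) = J a - J b"
proof -
  have diff: "J a - J b \<in> VH" using FV.subspace_diff[OF VH_FV_subspace J_in_VH J_in_VH] assms .
  have "IH (J a - J b) = a - b"
    using IH_diff J_in_VH IH_J assms VH_Vh by (simp add: subset_iff)
  then show ?thesis using J_IH[OF diff] by simp
qed

text \<open>Poincar\'e-type inequalities: the \<open>L\<^sup>2\<close> norm is controlled by the energy norms,
  a consequence of the approximation and stability properties of \<open>I\<^sub>H\<close>.\<close>
lemma poincare_coarse: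
  assumes v: "v \<in> VH"
  shows "L2_norm \<Omega> v \<le> CI * (D + 1) * nH v"
proof -
  have vV: "v \<in> Vh" and Iv: "IH v \<in> Vh" using v VH_Vh IH_range by auto
  have "L2_norm \<Omega> v = L2_norm \<Omega> ((v - IH v) + IH v)" by simp
  also have "\<dots> \<le> L2_norm \<Omega> (v - IH v) + L2_norm \<Omega> (IH v)"
    using L2_triangle Vh_L2 Vh.diff_in[OF vV Iv] Iv by blast
  also have "\<dots> \<le> CI * H * nH v + CI * nH v"
    using IH_approx_coarse IH_L2_coarse v by (simp add: add_mono)
  also have "\<dots> \<le> CI * D * nH v + CI * nH v"
    using scaled_H_le_D[OF CI_nonneg nH_nonneg[OF v]] by simp
  also have "\<dots> = CI * (D + 1) * nH v" by (simp add: algebra_simps)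
  finally show ?thesis .
qed

lemma poincare_fine:
  assumes v: "v \<in> Vh"
  shows "L2_norm \<Omega> v \<le> poincare_constant CI D * nh v"
proof -
  have Iv: "IH v \<in> VH" "IH v \<in> Vh" using v IH_range VH_Vh by auto
  have "L2_norm \<Omega> v = L2_norm \<Omega> ((v - IH v) + IH v)" by simp
  also have "\<dots> \<le> L2_norm \<Omega> (v - IH v) + L2_norm \<Omega> (IH v)"
    using L2_triangle Vh_L2 Vh.diff_in[OF v Iv(2)] Iv by blast
  also have "\<dots> \<le> CI * D * nh v + CI * (D + 1) * (CI * nh v)"
  proof (rule add_mono)
    have "L2_norm \<Omega> (v - IH v) \<le> CI * H * nh v" using IH_approx_fine v by blast
    also have "\<dots> \<le> CI * D * nh v" by (rule scaled_H_le_D[OF CI_nonneg nh_nonneg[OF v]])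
    finally show "L2_norm \<Omega> (v - IH v) \<le> CI * D * nh v" .
    have "L2_norm \<Omega> (IH v) \<le> CI * (D + 1) * nH (IH v)" by (rule poincare_coarse[OF Iv(1)])
    also have "\<dots> \<le> CI * (D + 1) * (CI * nh v)"
      using IH_stable_fine v CI_nonneg H_nonneg H_le_D by (simp add: mult_left_mono)
    finally show "L2_norm \<Omega> (IH v) \<le> CI * (D + 1) * (CI * nh v)" .
  qed
  also have "\<dots> = poincare_constant CI D * nh v"
    unfolding poincare_constant_def by (simp add: algebra_simps)
  finally show ?thesis .
qed

lemma L2_fine_scale:
  assumes "w \<in> Wh Vh IH"
  shows "L2_norm \<Omega> w \<le> CI * H * nh w"
  using IH_approx_fine assms by (auto simp: Wh_iff)

lemma poincare_constant_nonneg: "0 \<le> poincare_constant CI D"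
  unfolding poincare_constant_def using CI_nonneg H_nonneg H_le_D by simp

lemma energy_bound_from_source:
  assumes e: "e \<in> Vh" and source: "ah e e \<le> F * L2_norm \<Omega> e"
    and L2: "L2_norm \<Omega> e \<le> K * nh e" and "0 \<le> K" "0 \<le> F"
  shows "nh e \<le> K * F / \<alpha>"
proof (rule coercivity_bound[OF alpha_pos nh_nonneg[OF e]])
  have "\<alpha> * (nh e)\<^sup>2 \<le> ah e e" using coercive e by blast
  also have "\<dots> \<le> F * (K * nh e)" using source L2 \<open>0 \<le> F\<close> by (meson mult_left_mono order_trans)
  finally show "\<alpha> * (nh e)\<^sup>2 \<le> K * F * nh e" by (simp add: algebra_simps)
qed (use assms in simp)

lemma source_bound:
  assumes "L2_fun \<Omega> f" "v \<in> Vh"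
  shows "L2_inner \<Omega> f v \<le> L2_norm \<Omega> f * L2_norm \<Omega> v"
  using L2_cauchy_schwarz[OF assms(1)] Vh_L2 assms(2) by (meson abs_ge_self order_trans)

lemma coarse_reconstruction_stable:
  assumes v: "v \<in> Vh"
  shows "nH (J (IH v)) \<le> CIinv * CI * nh v"
proof -
  have "nH (J (IH v)) \<le> CIinv * nH (IH v)" using IH_inv_stable IH_range v by blast
  also have "\<dots> \<le> CIinv * (CI * nh v)"
    using IH_stable_fine v CIinv_nonneg by (simp add: mult_left_mono)
  finally show ?thesis by (simp add: mult.assoc)
qed

definition ideal_lod where
  "ideal_lod u = J (IH u) + Q (\<lambda>T. \<Omega>) (J (IH u))"

lemma ideal_lod_in_Vh: "u \<in> Vh \<Longrightarrow> ideal_lod u \<in> Vh"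
  unfolding ideal_lod_def using J_IH_in_VH VH_Vh corrector_in_Vh Vh.add_in by blast

lemma ideal_lod_fine_scale:
  assumes u: "u \<in> Vh"
  shows "u - ideal_lod u \<in> Wh Vh IH"
proof -
  let ?\<Phi> = "J (IH u)"
  have \<Phi>: "?\<Phi> \<in> Vh" using J_IH_in_VH u VH_Vh by blast
  have Q: "Q (\<lambda>T. \<Omega>) ?\<Phi> \<in> Vh" "IH (Q (\<lambda>T. \<Omega>) ?\<Phi>) = 0"
    using corrector_in_Wh[OF \<Phi>] Wh_iff by blast+
  have "IH (u - ideal_lod u) = IH u - (IH ?\<Phi> + IH (Q (\<lambda>T. \<Omega>) ?\<Phi>))"
    unfolding ideal_lod_def using IH_diff IH_add u \<Phi> Q Vh.add_in by simp
  also have "\<dots> = 0" using IH_J IH_range u Q(2) by simp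
  finally show ?thesis using Wh_iff u ideal_lod_in_Vh Vh.diff_in by blast
qed

lemma ideal_lod_orthogonal: "u \<in> Vh \<Longrightarrow> w \<in> Wh Vh IH \<Longrightarrow> ah (ideal_lod u) w = 0"
  unfolding ideal_lod_def using global_corrector_orthogonal J_IH_in_VH VH_Vh by blast

definition reference_solution where
  "reference_solution f uh \<longleftrightarrow> L2_fun \<Omega> f \<and> uh \<in> Vh \<and> (\<forall>v\<in>Vh. ah uh v = L2_inner \<Omega> f v)"

lemma reference_stability:
  assumes "reference_solution f uh"
  shows "nh uh \<le> poincare_constant CI D * L2_norm \<Omega> f / \<alpha>"
proof (rule energy_bound_from_source)
  show uh: "uh \<in> Vh" using assms unfolding reference_solution_def by blast
  show "ah uh uh \<le> L2_norm \<Omega> f * L2_norm \<Omega> uh"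
    using assms source_bound unfolding reference_solution_def by simp
qed (use poincare_fine[of uh] assms poincare_constant_nonneg L2_norm_nonneg in
       \<open>auto simp: reference_solution_def\<close>)

text \<open>Error of the ideal method: of order \<open>H\<close>, because the error lies in the kernel of \<open>I\<^sub>H\<close>.\<close>
lemma ideal_lod_error:
  assumes ref: "reference_solution f uh"
  shows "nh (uh - ideal_lod uh) \<le> CI * H * L2_norm \<Omega> f / \<alpha>"
proof -
  have f: "L2_fun \<Omega> f" and uh: "uh \<in> Vh" "\<forall>v\<in>Vh. ah uh v = L2_inner \<Omega> f v"
    using ref unfolding reference_solution_def by blast+
  let ?e = "uh - ideal_lod uh"
  have eW: "?e \<in> Wh Vh IH" by (rule ideal_lod_fine_scale[OF uh(1)])
  then have e: "?e \<in> Vh" using Wh_iff by blast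
  have "ah ?e ?e = ah uh ?e - ah (ideal_lod uh) ?e"
    using Vh.diff_left[OF uh(1) ideal_lod_in_Vh[OF uh(1)] e] .
  also have "\<dots> = L2_inner \<Omega> f ?e" using uh e ideal_lod_orthogonal[OF uh(1) eW] by simp
  also have "\<dots> \<le> L2_norm \<Omega> f * L2_norm \<Omega> ?e" by (rule source_bound[OF f e])
  finally show ?thesis
    using energy_bound_from_source[OF e _ L2_fine_scale[OF eW]] CI_nonneg H_nonneg
      L2_norm_nonneg[of \<Omega> f] by simp
qed

definition localization_bound where
  "localization_bound U C8 \<delta> \<longleftrightarrow> (\<forall>\<Phi>\<in>VH.
     (nh (Q U \<Phi> - Q (\<lambda>T. \<Omega>) \<Phi>))\<^sup>2 \<le> C8 * \<delta>\<^sup>2 * (nh (\<Phi> + Q (\<lambda>T. \<Omega>) \<Phi>))\<^sup>2)"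

lemma localization_error:
  assumes loc: "(nh (Q U \<Phi> - Q (\<lambda>T. \<Omega>) \<Phi>))\<^sup>2 \<le> C8 * \<delta>\<^sup>2 * (nh (\<Phi> + Q (\<lambda>T. \<Omega>) \<Phi>))\<^sup>2"
    and \<Phi>: "\<Phi> \<in> Vh" and "0 \<le> C8" "0 \<le> \<delta>"
  shows "nh (Q U \<Phi> - Q (\<lambda>T. \<Omega>) \<Phi>) \<le> sqrt C8 * \<delta> * nh (\<Phi> + Q (\<lambda>T. \<Omega>) \<Phi>)"
proof (rule power2_le_imp_le)
  have "(sqrt C8 * \<delta> * nh (\<Phi> + Q (\<lambda>T. \<Omega>) \<Phi>))\<^sup>2 = C8 * \<delta>\<^sup>2 * (nh (\<Phi> + Q (\<lambda>T. \<Omega>) \<Phi>))\<^sup>2"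
    using \<open>0 \<le> C8\<close> by (simp add: power_mult_distrib)
  then show "(nh (Q U \<Phi> - Q (\<lambda>T. \<Omega>) \<Phi>))\<^sup>2 \<le> (sqrt C8 * \<delta> * nh (\<Phi> + Q (\<lambda>T. \<Omega>) \<Phi>))\<^sup>2"
    using loc by simp
  show "0 \<le> sqrt C8 * \<delta> * nh (\<Phi> + Q (\<lambda>T. \<Omega>) \<Phi>)"
    using assms nh_nonneg Vh.add_in corrector_in_Vh by simp
qed

lemma Vms_subset_Vh: "Vms \<Omega> TH Vh VH IH ah aT U \<subseteq> Vh"
  unfolding Vms_def using VH_Vh corrector_in_Vh Vh.add_in by (auto simp: fadd_eq)

lemma quasi_optimality:
  assumes u: "u \<in> Vh" and uG: "uG \<in> Vh" and v: "v \<in> Vh"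
    and galerkin: "ah (u - uG) (v - uG) = 0"
  shows "nh (u - uG) \<le> \<beta> / \<alpha> * nh (u - v)"
proof -
  let ?e = "u - uG"
  have e: "?e \<in> Vh" using Vh.diff_in[OF u uG] .
  have "\<alpha> * (nh ?e)\<^sup>2 \<le> ah ?e ?e" using coercive e by blast
  also have "\<dots> = ah ?e (u - v) + ah ?e (v - uG)"
    using Vh.add_right[OF Vh.diff_in[OF u v] Vh.diff_in[OF v uG] e] by simp
  also have "\<dots> \<le> \<beta> * nh ?e * nh (u - v)"
    using galerkin continuous e Vh.diff_in[OF u v] by simp
  finally have "\<alpha> * (nh ?e)\<^sup>2 \<le> (\<beta> * nh (u - v)) * nh ?e" by (simp add: algebra_simps)
  from coercivity_bound[OF alpha_pos nh_nonneg[OF e] this] show ?thesis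
    using alpha_pos alpha_le_beta nh_nonneg Vh.diff_in[OF u v] by simp
qed

lemma ideal_lod_stability:
  assumes ref: "reference_solution f uh"
  shows "nh (ideal_lod uh) \<le> (poincare_constant CI D + CI * D) * L2_norm \<Omega> f / \<alpha>"
proof -
  let ?F = "L2_norm \<Omega> f"
  have uh: "uh \<in> Vh" using ref unfolding reference_solution_def by blast
  have F: "0 \<le> ?F" by (rule L2_norm_nonneg)
  have "nh (ideal_lod uh) = nh (uh - (uh - ideal_lod uh))" by simp
  also have "\<dots> \<le> nh uh + nh (uh - ideal_lod uh)"
    using nh_diff uh Vh.diff_in[OF uh ideal_lod_in_Vh[OF uh]] by blast
  also have "\<dots> \<le> poincare_constant CI D * ?F / \<alpha> + CI * D * ?F / \<alpha>"
    using reference_stability[OF ref] ideal_lod_error[OF ref]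
      divide_right_mono[OF scaled_H_le_D[OF CI_nonneg F], of \<alpha>] alpha_pos by linarith
  also have "\<dots> = (poincare_constant CI D + CI * D) * ?F / \<alpha>"
    by (simp add: add_divide_distrib distrib_right)
  finally show ?thesis .
qed

text \<open>The multiscale function built from the same coarse part as the ideal approximation,
  but with localised correctors, is close to the reference solution: the ideal error
  plus the localisation error.\<close>
lemma localized_approximation_error:
  assumes ref: "reference_solution f uh" and loc: "localization_bound U C8 \<delta>"
    and C8: "0 \<le> C8" and \<delta>: "0 \<le> \<delta>"
  shows "nh (uh - (J (IH uh) + Q U (J (IH uh))))
     \<le> (CI + sqrt C8 * (poincare_constant CI D + CI * D)) / \<alpha> * (H + \<delta>) * L2_norm \<Omega> f"
proof -
  let ?\<Phi> = "J (IH uh)" and ?uO = "ideal_lod uh" and ?F = "L2_norm \<Omega> f"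
    and ?Cl = "poincare_constant CI D + CI * D"
  have uh: "uh \<in> Vh" using ref unfolding reference_solution_def by blast
  have \<Phi>: "?\<Phi> \<in> VH" "?\<Phi> \<in> Vh" using J_IH_in_VH[OF uh] VH_Vh by auto
  have corr: "Q U ?\<Phi> - Q (\<lambda>T. \<Omega>) ?\<Phi> \<in> Vh"
    using Vh.diff_in corrector_in_Vh[OF \<Phi>(2)] by blast
  have F: "0 \<le> ?F" by (rule L2_norm_nonneg)
  have loc_\<Phi>: "nh (Q U ?\<Phi> - Q (\<lambda>T. \<Omega>) ?\<Phi>) \<le> sqrt C8 * \<delta> * nh ?uO"
    using localization_error[of U ?\<Phi> C8 \<delta>] loc \<Phi> C8 \<delta>
    unfolding localization_bound_def ideal_lod_def by blast
  have split: "uh - (?\<Phi> + Q U ?\<Phi>) = (uh - ?uO) - (Q U ?\<Phi> - Q (\<lambda>T. \<Omega>) ?\<Phi>)"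
    unfolding ideal_lod_def by simp
  have "nh (uh - (?\<Phi> + Q U ?\<Phi>)) \<le> nh (uh - ?uO) + nh (Q U ?\<Phi> - Q (\<lambda>T. \<Omega>) ?\<Phi>)"
    unfolding split by (rule nh_diff[OF Vh.diff_in[OF uh ideal_lod_in_Vh[OF uh]] corr])
  also have "\<dots> \<le> CI * H * ?F / \<alpha> + sqrt C8 * \<delta> * (?Cl * ?F / \<alpha>)"
    by (intro add_mono ideal_lod_error[OF ref] order_trans[OF loc_\<Phi>] mult_left_mono
        ideal_lod_stability[OF ref]) (use C8 \<delta> in simp)
  also have "\<dots> = (CI / \<alpha>) * H * ?F + (sqrt C8 * ?Cl / \<alpha>) * \<delta> * ?F"
    by (simp add: algebra_simps)
  also have "\<dots> \<le> (CI / \<alpha> + sqrt C8 * ?Cl / \<alpha>) * (H + \<delta>) * ?F"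
    by (rule two_scale_sum_le[OF _ _ H_nonneg \<delta> F])
      (use CI_nonneg alpha_pos C8 poincare_constant_nonneg H_nonneg H_le_D in simp_all)
  also have "\<dots> = (CI + sqrt C8 * ?Cl) / \<alpha> * (H + \<delta>) * ?F"
    by (simp add: add_divide_distrib)
  finally show ?thesis .
qed

definition glod_solution where
  "glod_solution U f uG \<longleftrightarrow> uG \<in> Vms \<Omega> TH Vh VH IH ah aT U
     \<and> (\<forall>\<Phi>\<in>Vms \<Omega> TH Vh VH IH ah aT U. ah uG \<Phi> = L2_inner \<Omega> f \<Phi>)"

text \<open>Energy error of the G-LOD solution: by C\'ea's lemma it is bounded by the error of the
  localised approximation above, which is an element of \<open>V\<^sup>m\<^sup>s\<close>.\<close>
lemma glod_energy_error:
  assumes ref: "reference_solution f uh" and loc: "localization_bound U C8 \<delta>"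
    and "0 \<le> C8" "0 \<le> \<delta>" and glod: "glod_solution U f uG"
  shows "nh (uh - uG) \<le> energy_constant CI C8 \<alpha> \<beta> D * (H + \<delta>) * L2_norm \<Omega> f"
proof -
  let ?v = "J (IH uh) + Q U (J (IH uh))"
  have uh: "uh \<in> Vh" "\<forall>w\<in>Vh. ah uh w = L2_inner \<Omega> f w"
    using ref unfolding reference_solution_def by blast+
  have v: "?v \<in> Vms \<Omega> TH Vh VH IH ah aT U"
    unfolding Vms_def using J_IH_in_VH[OF uh(1)] by (auto simp: fadd_eq)
  have uG: "uG \<in> Vms \<Omega> TH Vh VH IH ah aT U" "\<forall>w\<in>Vms \<Omega> TH Vh VH IH ah aT U. ah uG w = L2_inner \<Omega> f w"
    using glod unfolding glod_solution_def by blast+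
  have vV: "?v \<in> Vh" and uGV: "uG \<in> Vh" using v uG(1) Vms_subset_Vh by blast+
  have "ah (uh - uG) (?v - uG) = (ah uh ?v - ah uG ?v) - (ah uh uG - ah uG uG)"
    using Vh.diff_right[OF vV uGV] Vh.diff_left uh(1) uGV vV Vh.diff_in by simp
  also have "\<dots> = 0" using uh uG v vV uGV by simp
  finally have "nh (uh - uG) \<le> \<beta> / \<alpha> * nh (uh - ?v)"
    by (rule quasi_optimality[OF uh(1) uGV vV])
  also have "\<dots> \<le> \<beta> / \<alpha> * ((CI + sqrt C8 * (poincare_constant CI D + CI * D)) / \<alpha> * (H + \<delta>) * L2_norm \<Omega> f)"
    by (rule mult_left_mono[OF localized_approximation_error[OF ref loc assms(3,4)]])
      (use alpha_pos alpha_le_beta in simp)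
  finally show ?thesis by (simp add: energy_constant_def)
qed

lemma coarse_reconstruction_L2_error:
  assumes u: "u \<in> Vh"
  shows "L2_norm \<Omega> (u - J (IH u)) \<le> CI * H * (1 + CIinv * CI) * nh u"
proof -
  let ?\<Phi> = "J (IH u)"
  have \<Phi>: "?\<Phi> \<in> VH" "?\<Phi> \<in> Vh" using J_IH_in_VH[OF u] VH_Vh by auto
  have I: "IH u \<in> Vh" "IH ?\<Phi> \<in> Vh" using IH_range u \<Phi> VH_Vh by auto
  have split: "u - ?\<Phi> = (u - IH u) + (IH ?\<Phi> - ?\<Phi>)" using IH_J IH_range u by simp
  have "L2_norm \<Omega> (u - ?\<Phi>) \<le> L2_norm \<Omega> (u - IH u) + L2_norm \<Omega> (IH ?\<Phi> - ?\<Phi>)"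
    unfolding split by (rule L2_triangle) (use Vh_L2 Vh.diff_in u I \<Phi>(2) in auto)
  also have "\<dots> \<le> CI * H * nh u + CI * H * nH ?\<Phi>"
    using IH_approx_fine IH_approx_coarse u \<Phi>(1) L2_norm_minus_commute[of \<Omega> "IH ?\<Phi>" ?\<Phi>]
    by (simp add: add_mono)
  also have "\<dots> \<le> CI * H * nh u + CI * H * (CIinv * CI * nh u)"
    using coarse_reconstruction_stable[OF u] CI_nonneg H_nonneg by (simp add: mult_left_mono)
  also have "\<dots> = CI * H * (1 + CIinv * CI) * nh u" by (simp add: algebra_simps)
  finally show ?thesis .
qed

text \<open>The \<open>L\<^sup>2\<close> error of the reconstructed coarse solution is bounded by an \<open>O(H)\<close> term and
  the energy error: \<open>(I\<^sub>H|\<^sub>V\<^sub>H)\<^sup>-\<^sup>1 \<circ> I\<^sub>H\<close> is linear and energy-to-\<open>L\<^sup>2\<close> stable on \<open>V\<^sub>H\<close>.\<close>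
lemma reconstruction_L2_error:
  assumes uh: "uh \<in> Vh" and uG: "uG \<in> Vh"
  shows "L2_norm \<Omega> (uh - J (IH uG))
     \<le> CI * H * (1 + CIinv * CI) * nh uh + CI * (D + 1) * (CIinv * CI) * nh (uh - uG)"
proof -
  let ?e = "uh - uG"
  have e: "?e \<in> Vh" using Vh.diff_in[OF uh uG] .
  have "J (IH ?e) = J (IH uh) - J (IH uG)"
    using IH_diff[OF uh uG] J_diff IH_range uh uG by simp
  then have split: "uh - J (IH uG) = (uh - J (IH uh)) + J (IH ?e)" by simp
  have "L2_norm \<Omega> (uh - J (IH uG)) \<le> L2_norm \<Omega> (uh - J (IH uh)) + L2_norm \<Omega> (J (IH ?e))"
    unfolding split by (rule L2_triangle)
      (use Vh_L2 Vh.diff_in[OF uh] J_IH_in_VH e uh VH_Vh in \<open>auto simp: subset_iff\<close>)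
  also have "\<dots> \<le> CI * H * (1 + CIinv * CI) * nh uh + CI * (D + 1) * (CIinv * CI * nh ?e)"
  proof (rule add_mono)
    show "L2_norm \<Omega> (uh - J (IH uh)) \<le> CI * H * (1 + CIinv * CI) * nh uh"
      by (rule coarse_reconstruction_L2_error[OF uh])
    have "L2_norm \<Omega> (J (IH ?e)) \<le> CI * (D + 1) * nH (J (IH ?e))"
      by (rule poincare_coarse[OF J_IH_in_VH[OF e]])
    also have "\<dots> \<le> CI * (D + 1) * (CIinv * CI * nh ?e)"
      using coarse_reconstruction_stable[OF e] CI_nonneg H_nonneg H_le_D by (simp add: mult_left_mono)
    finally show "L2_norm \<Omega> (J (IH ?e)) \<le> CI * (D + 1) * (CIinv * CI * nh ?e)" .
  qed
  finally show ?thesis by (simp add: mult.assoc)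
qed

theorem glod_error_estimate:
  assumes ref: "reference_solution f uh" and loc: "localization_bound U C8 \<delta>"
    and C8: "0 \<le> C8" and \<delta>: "0 \<le> \<delta>" and glod: "glod_solution U f uG"
  shows "L2_norm \<Omega> (uh - J (IH uG)) + nh (uh - uG)
     \<le> glod_constant CI CIinv C8 \<alpha> \<beta> D * (H + \<delta>) * L2_norm \<Omega> f"
proof -
  let ?F = "L2_norm \<Omega> f" and ?Cp = "poincare_constant CI D"
    and ?Ke = "energy_constant CI C8 \<alpha> \<beta> D" and ?c = "CI * (D + 1) * (CIinv * CI)"
  have uh: "uh \<in> Vh" using ref unfolding reference_solution_def by blast
  have uG: "uG \<in> Vh" using glod Vms_subset_Vh unfolding glod_solution_def by blast
  have F: "0 \<le> ?F" by (rule L2_norm_nonneg)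
  have c: "0 \<le> ?c" using CI_nonneg CIinv_nonneg H_nonneg H_le_D by simp
  have energy: "nh (uh - uG) \<le> ?Ke * (H + \<delta>) * ?F"
    by (rule glod_energy_error[OF ref loc C8 \<delta> glod])
  have "CI * H * (1 + CIinv * CI) * nh uh \<le> CI * H * (1 + CIinv * CI) * (?Cp * ?F / \<alpha>)"
    by (rule mult_left_mono[OF reference_stability[OF ref]]) (use CI_nonneg CIinv_nonneg H_nonneg in simp)
  also have "\<dots> = CI * (1 + CIinv * CI) * ?Cp / \<alpha> * H * ?F" by simp
  also have "\<dots> \<le> CI * (1 + CIinv * CI) * ?Cp / \<alpha> * (H + \<delta>) * ?F"
    by (intro mult_right_mono mult_left_mono)
      (use CI_nonneg CIinv_nonneg poincare_constant_nonneg alpha_pos F \<delta> in simp_all)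
  finally have coarse: "CI * H * (1 + CIinv * CI) * nh uh \<le> CI * (1 + CIinv * CI) * ?Cp / \<alpha> * (H + \<delta>) * ?F" .
  have "L2_norm \<Omega> (uh - J (IH uG)) + nh (uh - uG)
      \<le> CI * H * (1 + CIinv * CI) * nh uh + (?c + 1) * nh (uh - uG)"
    using reconstruction_L2_error[OF uh uG] by (simp add: algebra_simps)
  also have "\<dots> \<le> CI * (1 + CIinv * CI) * ?Cp / \<alpha> * (H + \<delta>) * ?F + (?c + 1) * (?Ke * (H + \<delta>) * ?F)"
    using coarse mult_left_mono[OF energy, of "?c + 1"] c by (intro add_mono) simp_all
  also have "\<dots> = glod_constant CI CIinv C8 \<alpha> \<beta> D * (H + \<delta>) * ?F"
    unfolding glod_constant_def by (simp add: algebra_simps)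
  finally show ?thesis .
qed

end

lemma mesh_size_bounds:
  assumes mesh: "conforming_mesh \<Omega> \<T>" and bnd: "bounded \<Omega>"
  shows "0 \<le> mesh_size \<T>" "mesh_size \<T> \<le> diameter \<Omega>"
proof -
  have fin: "finite \<T>" "\<T> \<noteq> {}" and cover: "\<Union>\<T> = closure \<Omega>"
    using mesh unfolding conforming_mesh_def by auto
  have diam: "0 \<le> diameter K \<and> diameter K \<le> diameter \<Omega>" if "K \<in> \<T>" for K
  proof -
    have "K \<subseteq> closure \<Omega>" using cover that by blast
    then show ?thesis
      using diameter_ge_0 bounded_subset[OF bounded_closure[OF bnd]]
        diameter_subset[OF _ bounded_closure[OF bnd]] diameter_closure[OF bnd] by metis
  qed
  obtain K where K: "K \<in> \<T>" using fin by blast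
  have "diameter K \<le> mesh_size \<T>" unfolding mesh_size_def using fin K by (simp add: Max_ge_iff)
  then show "0 \<le> mesh_size \<T>" using diam[OF K] by simp
  show "mesh_size \<T> \<le> diameter \<Omega>" unfolding mesh_size_def using fin diam by (simp add: Max_le_iff)
qed

lemma decay_rate_square:
  assumes "1 \<le> k"
  shows "((1 / H) ^ p * real k powr (real d / 2) * \<theta> ^ k)\<^sup>2
    = real k ^ d * \<theta> ^ (2 * k) * (1 / H) ^ (2 * p)"
proof -
  have "(real k powr (real d / 2))\<^sup>2 = real k powr real d"
    by (simp add: powr_powr[symmetric] power2_eq_square powr_add[symmetric])
  also have "\<dots> = real k ^ d" using assms by (simp add: powr_realpow)
  finally show ?thesis by (simp add: power_mult_distrib power_mult[symmetric] mult.commute)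
qed

lemma le_abs_mult: "x \<le> c * y \<Longrightarrow> 0 \<le> y \<Longrightarrow> x \<le> \<bar>c\<bar> * (y :: real)"
  by (meson abs_ge_self mult_right_mono order_trans)

text \<open>The estimate for one instance of the data, with the constant made explicit: the
  hypotheses of the theorem form an instance of \<open>lod_setting\<close> (with \<open>D\<close> the diameter
  of \<open>\<Omega>\<close>), and (A8) is the localisation bound with rate \<open>(1/H)\<^sup>p k\<^sup>d\<^sup>/\<^sup>2 \<theta>\<^sup>k\<close>.\<close>
lemma glod_error_bound:
  fixes \<Omega> :: "(real^'d::finite) set"
  assumes bnd: "bounded \<Omega>" and ab: "0 < \<alpha>" "\<alpha> \<le> \<beta>" and \<theta>: "0 < \<theta>"
    and mesh: "conforming_mesh \<Omega> TH"
    and Vh: "fsubspace Vh" "findim Vh" "\<forall>v\<in>Vh. L2_fun \<Omega> v"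
    and VH: "fsubspace VH" "VH \<subseteq> Vh"
    and sp: "scalar_product_on Vh ah"
    and nh: "norm_on Vh nh" "\<forall>v\<in>Vh. \<alpha> * (nh v)\<^sup>2 \<le> ah v v" "\<forall>v\<in>Vh. \<forall>w\<in>Vh. ah v w \<le> \<beta> * nh v * nh w"
    and nH: "norm_on VH nH"
    and IH: "linear_on Vh IH" "\<forall>v\<in>Vh. IH v \<in> VH"
      "\<forall>v\<in>Vh. L2_norm \<Omega> (fdiff v (IH v)) \<le> CI * mesh_size TH * nh v"
      "\<forall>v\<in>Vh. nH (IH v) \<le> CI * nh v"
      "\<forall>v\<in>VH. L2_norm \<Omega> (fdiff v (IH v)) \<le> CI * mesh_size TH * nH v"
      "\<forall>v\<in>VH. L2_norm \<Omega> (IH v) \<le> CI * nH v"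
      "bij_betw IH VH VH" "\<forall>v\<in>VH. nH (inv_into VH IH v) \<le> CIinv * nH v"
    and aT: "\<forall>T\<in>TH. bilinear_on Vh (aT T)" "\<forall>v\<in>Vh. \<forall>w\<in>Vh. ah v w = (\<Sum>T\<in>TH. aT T v w)"
    and A8: "\<forall>m::nat. m \<ge> 1 \<longrightarrow> (\<forall>\<Phi>\<in>VH.
         (nh (fdiff (corrector \<Omega> TH Vh IH ah aT (patch TH m) \<Phi>)
                    (corrector \<Omega> TH Vh IH ah aT (\<lambda>T. \<Omega>) \<Phi>)))\<^sup>2
         \<le> C8 * real m ^ CARD('d) * \<theta> ^ (2 * m) * (1 / mesh_size TH) ^ (2 * p)
              * (nh (fadd \<Phi> (corrector \<Omega> TH Vh IH ah aT (\<lambda>T. \<Omega>) \<Phi>)))\<^sup>2)"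
    and ref: "L2_fun \<Omega> f" "uh \<in> Vh" "\<forall>v\<in>Vh. ah uh v = L2_inner \<Omega> f v"
    and k: "k \<ge> 1"
    and glod: "uLOD \<in> Vms \<Omega> TH Vh VH IH ah aT (patch TH k)"
      "\<forall>\<Phi>\<in>Vms \<Omega> TH Vh VH IH ah aT (patch TH k). ah uLOD \<Phi> = L2_inner \<Omega> f \<Phi>"
  shows "L2_norm \<Omega> (fdiff uh (inv_into VH IH (IH uLOD))) + nh (fdiff uh uLOD)
    \<le> glod_constant \<bar>CI\<bar> \<bar>CIinv\<bar> \<bar>C8\<bar> \<alpha> \<beta> (diameter \<Omega>)
       * (mesh_size TH + (1 / mesh_size TH) ^ p * real k powr (real CARD('d) / 2) * \<theta> ^ k)
       * L2_norm \<Omega> f"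
proof -
  define H where "H = mesh_size TH"
  define \<delta> where "\<delta> = (1 / H) ^ p * real k powr (real CARD('d) / 2) * \<theta> ^ k"
  have H: "0 \<le> H" "H \<le> diameter \<Omega>" using mesh_size_bounds[OF mesh bnd] by (simp_all add: H_def)
  have \<delta>: "0 \<le> \<delta>" using H \<theta> by (simp add: \<delta>_def)
  interpret lod_setting \<Omega> TH Vh IH ah aT VH nh nH H "diameter \<Omega>" "\<bar>CI\<bar>" "\<bar>CIinv\<bar>" \<alpha> \<beta>
  proof unfold_locales
    show "finite TH" using mesh unfolding conforming_mesh_def by blast
    show "\<forall>v\<in>Vh. L2_norm \<Omega> (v - IH v) \<le> \<bar>CI\<bar> * H * nh v"
      using IH(3) H norm_on_nonneg[OF nh(1)] le_abs_mult[of _ CI "H * _"]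
      by (simp add: H_def fdiff_eq mult.assoc)
    show "\<forall>v\<in>VH. L2_norm \<Omega> (v - IH v) \<le> \<bar>CI\<bar> * H * nH v"
      using IH(5) H norm_on_nonneg[OF nH] le_abs_mult[of _ CI "H * _"]
      by (simp add: H_def fdiff_eq mult.assoc)
    show "\<forall>v\<in>Vh. nH (IH v) \<le> \<bar>CI\<bar> * nh v"
      using IH(4) norm_on_nonneg[OF nh(1)] le_abs_mult by blast
    show "\<forall>v\<in>VH. L2_norm \<Omega> (IH v) \<le> \<bar>CI\<bar> * nH v"
      using IH(6) norm_on_nonneg[OF nH] le_abs_mult by blast
    show "\<forall>v\<in>VH. nH (inv_into VH IH v) \<le> \<bar>CIinv\<bar> * nH v"
      using IH(8) norm_on_nonneg[OF nH] le_abs_mult by blast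
  qed (use Vh VH sp nh nH IH aT ab H in auto)
  have "localization_bound (patch TH k) \<bar>C8\<bar> \<delta>"
    unfolding localization_bound_def
  proof
    fix \<Phi> assume "\<Phi> \<in> VH"
    then have "(nh (Q (patch TH k) \<Phi> - Q (\<lambda>T. \<Omega>) \<Phi>))\<^sup>2
        \<le> C8 * (real k ^ CARD('d) * \<theta> ^ (2 * k) * (1 / H) ^ (2 * p)) * (nh (\<Phi> + Q (\<lambda>T. \<Omega>) \<Phi>))\<^sup>2"
      using A8 k by (simp add: H_def fdiff_eq fadd_eq mult.assoc)
    also have "\<dots> \<le> \<bar>C8\<bar> * \<delta>\<^sup>2 * (nh (\<Phi> + Q (\<lambda>T. \<Omega>) \<Phi>))\<^sup>2"
      unfolding \<delta>_def decay_rate_square[OF k]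
      by (intro mult_right_mono) (use H \<theta> in simp_all)
    finally show "(nh (Q (patch TH k) \<Phi> - Q (\<lambda>T. \<Omega>) \<Phi>))\<^sup>2 \<le> \<bar>C8\<bar> * \<delta>\<^sup>2 * (nh (\<Phi> + Q (\<lambda>T. \<Omega>) \<Phi>))\<^sup>2" .
  qed
  from glod_error_estimate[OF _ this _ \<delta>, of f uh uLOD] ref glod
  show ?thesis
    unfolding reference_solution_def glod_solution_def \<delta>_def H_def by (simp add: fdiff_eq)
qed

theorem theorem3p1:
  fixes \<Omega> :: "(real^'d) set"
    and \<rho> \<alpha> \<beta> CI CIinv C8 \<theta> :: real
    and p :: nat
  assumes dim: "CARD('d) \<in> {1, 2, 3}"
    and dom: "open \<Omega>" "bounded \<Omega>" "connected \<Omega>" "\<Omega> \<noteq> {}"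
    and ab: "0 < \<alpha>" "\<alpha> \<le> \<beta>"
    and th: "0 < \<theta>" "\<theta> < 1"
    and p01: "p \<in> {0, 1}"
  shows "\<exists>C. \<forall>(\<T>H :: (real^'d) set set) \<T>h Vh VH ah aH nh nH IH aT f uh uLOD (k :: nat).
    ( \<comment> \<open>meshes\<close>
      conforming_mesh \<Omega> \<T>H \<and> conforming_mesh \<Omega> \<T>h \<and>
      shape_regular \<rho> \<T>H \<and> shape_regular \<rho> \<T>h \<and>
      refines \<T>h \<T>H \<and> mesh_size \<T>h < mesh_size \<T>H / 2 \<and>
      \<comment> \<open>(A4)/(A6)\<close>
      fsubspace Vh \<and> findim Vh \<and> (\<forall>v\<in>Vh. L2_fun \<Omega> v) \<and>
      fsubspace VH \<and> VH \<subseteq> Vh \<and>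
      scalar_product_on Vh ah \<and> scalar_product_on VH aH \<and>
      \<comment> \<open>(A5)\<close>
      norm_on Vh nh \<and>
      (\<forall>v\<in>Vh. \<alpha> * (nh v)\<^sup>2 \<le> ah v v) \<and>
      (\<forall>v\<in>Vh. \<forall>w\<in>Vh. ah v w \<le> \<beta> * nh v * nh w) \<and>
      norm_on VH nH \<and> (\<exists>CHh. \<forall>v\<in>Vh. nH v \<le> CHh * nh v) \<and>
      \<comment> \<open>(A7)\<close>
      linear_on Vh IH \<and> (\<forall>v\<in>Vh. IH v \<in> VH) \<and>
      (\<forall>v\<in>Vh. L2_norm \<Omega> (fdiff v (IH v)) \<le> CI * mesh_size \<T>H * nh v) \<and>
      (\<forall>v\<in>Vh. nH (IH v) \<le> CI * nh v) \<and>
      (\<forall>v\<in>VH. L2_norm \<Omega> (fdiff v (IH v)) \<le> CI * mesh_size \<T>H * nH v) \<and>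
      (\<forall>v\<in>VH. L2_norm \<Omega> (IH v) \<le> CI * nH v) \<and>
      bij_betw IH VH VH \<and>
      (\<forall>v\<in>VH. nH (inv_into VH IH v) \<le> CIinv * nH v) \<and>
      \<comment> \<open>element contributions a_h^T\<close>
      (\<forall>T\<in>\<T>H. bilinear_on Vh (aT T)) \<and>
      (\<forall>v\<in>Vh. \<forall>w\<in>Vh. ah v w = (\<Sum>T\<in>\<T>H. aT T v w)) \<and>
      \<comment> \<open>(A8)\<close>
      (\<forall>m::nat. m \<ge> 1 \<longrightarrow> (\<forall>\<Phi>\<in>VH.
         (nh (fdiff (corrector \<Omega> \<T>H Vh IH ah aT (patch \<T>H m) \<Phi>)
                    (corrector \<Omega> \<T>H Vh IH ah aT (\<lambda>T. \<Omega>) \<Phi>)))\<^sup>2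
         \<le> C8 * real m ^ CARD('d) * \<theta> ^ (2 * m) * (1 / mesh_size \<T>H) ^ (2 * p)
              * (nh (fadd \<Phi> (corrector \<Omega> \<T>H Vh IH ah aT (\<lambda>T. \<Omega>) \<Phi>)))\<^sup>2)) \<and>
      \<comment> \<open>data, reference solution, G-LOD solution\<close>
      L2_fun \<Omega> f \<and>
      uh \<in> Vh \<and> (\<forall>v\<in>Vh. ah uh v = L2_inner \<Omega> f v) \<and>
      k \<ge> 1 \<and>
      uLOD \<in> Vms \<Omega> \<T>H Vh VH IH ah aT (patch \<T>H k) \<and>
      (\<forall>\<Phi>\<in>Vms \<Omega> \<T>H Vh VH IH ah aT (patch \<T>H k). ah uLOD \<Phi> = L2_inner \<Omega> f \<Phi>))
    \<longrightarrow>
      L2_norm \<Omega> (fdiff uh (inv_into VH IH (IH uLOD))) + nh (fdiff uh uLOD)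
        \<le> C * (mesh_size \<T>H + (1 / mesh_size \<T>H) ^ p * real k powr (real CARD('d) / 2) * \<theta> ^ k)
            * L2_norm \<Omega> f"
  using dom(2) ab th(1)
  by (intro exI[of _ "glod_constant \<bar>CI\<bar> \<bar>CIinv\<bar> \<bar>C8\<bar> \<alpha> \<beta> (diameter \<Omega>)"] allI impI, elim conjE)
    (rule glod_error_bound; assumption)

end
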